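(* Let $H\in\mathcal K_r(n)$, and let $A,B$ be hyperedges of $H$ with $|A|\le n/2$ and $|B|\le n/2$. Then $A\cap B$ is a hyperedge of $H$.
   Context: $\mathcal K_r(n)$ is the class of hypergraphs on vertex set $V=[n]$ (identified with their hyperedge sets $\mathcal E$) satisfying: (R0) every $X\subseteq V$ with $|X|\le r$ is in $\mathcal E$; (R1) $A\in\mathcal E\Rightarrow V\setminus A\in\mathcal E$; (R2) $A,B\in\mathcal E$ and $|A\cap B|\ge r\Rightarrow A\cup B\in\mathcal E$. *)

theory Defs
  imports Main
begin

text \<open>A hypergraph on vertex set V = [n] = {1..n} is identified with its set of
hyperedges E, a family of subsets of V. K r n is the class of such hypergraphs
satisfying (R0), (R1), (R2).\<close>

definition K :: "nat \<Rightarrow> nat \<Rightarrow> nat set set set" where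
  "K r n = {E. E \<subseteq> Pow {1..n}
     \<and> (\<forall>X. X \<subseteq> {1..n} \<and> card X \<le> r \<longrightarrow> X \<in> E)
     \<and> (\<forall>A\<in>E. {1..n} - A \<in> E)
     \<and> (\<forall>A\<in>E. \<forall>B\<in>E. card (A \<inter> B) \<ge> r \<longrightarrow> A \<union> B \<in> E)}"

end

theory Submission
  imports Defs
begin

text \<open>If \<open>|A \<inter> B| \<le> r\<close> then \<open>A \<inter> B\<close> is a hyperedge by (R0). Otherwise the complements
of \<open>A\<close> and \<open>B\<close> share \<open>n - |A| - |B| + |A \<inter> B| \<ge> |A \<inter> B| > r\<close> vertices, so their union
is a hyperedge by (R2), and by (R1) so is its complement, which is \<open>A \<inter> B\<close>.\<close>

lemma K_hyperedge_subset: "E \<in> K r n \<Longrightarrow> A \<in> E \<Longrightarrow> A \<subseteq> {1..n}"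
  unfolding K_def by auto

lemma K_small: "E \<in> K r n \<Longrightarrow> X \<subseteq> {1..n} \<Longrightarrow> card X \<le> r \<Longrightarrow> X \<in> E"
  unfolding K_def by auto

lemma K_compl: "E \<in> K r n \<Longrightarrow> A \<in> E \<Longrightarrow> {1..n} - A \<in> E"
  unfolding K_def by auto

lemma K_Un: "E \<in> K r n \<Longrightarrow> A \<in> E \<Longrightarrow> B \<in> E \<Longrightarrow> r \<le> card (A \<inter> B) \<Longrightarrow> A \<union> B \<in> E"
  unfolding K_def by auto

lemma K_Int:
  assumes E: "E \<in> K r n" and A: "A \<in> E" and B: "B \<in> E"
    and large: "r \<le> card ({1..n} - (A \<union> B))"
  shows "A \<inter> B \<in> E"
proof -
  let ?V = "{1..n}"
  have "(?V - A) \<inter> (?V - B) = ?V - (A \<union> B)" by blast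
  with large have "(?V - A) \<union> (?V - B) \<in> E"
    using K_Un[OF E K_compl[OF E A] K_compl[OF E B]] by simp
  then have "?V - ((?V - A) \<union> (?V - B)) \<in> E" by (rule K_compl[OF E])
  moreover have "?V - ((?V - A) \<union> (?V - B)) = A \<inter> B"
    using K_hyperedge_subset[OF E A] K_hyperedge_subset[OF E B] by blast
  ultimately show ?thesis by simp
qed

lemma card_interval_diff_Un:
  assumes "A \<subseteq> {1..n}" and "B \<subseteq> {1..n}"
  shows "card ({1..n} - (A \<union> B)) + card A + card B = n + card (A \<inter> B)"
proof -
  have "finite A" "finite B" using assms finite_subset by blast+
  then have "card (A \<union> B) + card (A \<inter> B) = card A + card B" by (rule card_Un_Int[symmetric])
  moreover have "card ({1..n} - (A \<union> B)) + card (A \<union> B) = n"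
    using card_Diff_subset[of "A \<union> B" "{1..n}"] card_mono[of "{1..n}" "A \<union> B"]
      \<open>finite A\<close> \<open>finite B\<close> assms by auto
  ultimately show ?thesis by linarith
qed

lemma K_Int_if_card_sum_le:
  assumes E: "E \<in> K r n" and A: "A \<in> E" and B: "B \<in> E"
    and sum_le: "card A + card B \<le> n"
  shows "A \<inter> B \<in> E"
proof (cases "card (A \<inter> B) \<le> r")
  case True
  with K_hyperedge_subset[OF E A] show ?thesis by (intro K_small[OF E]) auto
next
  case False
  have "card ({1..n} - (A \<union> B)) + card A + card B = n + card (A \<inter> B)"
    using K_hyperedge_subset[OF E A] K_hyperedge_subset[OF E B] by (rule card_interval_diff_Un)
  with False sum_le have "r \<le> card ({1..n} - (A \<union> B))" by linarith
  with E A B show ?thesis by (rule K_Int)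
qed

theorem mainTheorem9:
  fixes r n :: nat and H :: "nat set set" and A B :: "nat set"
  assumes "H \<in> K r n"
    and "A \<in> H" and "B \<in> H"
    and "2 * card A \<le> n" and "2 * card B \<le> n"
  shows "A \<inter> B \<in> H"
  using assms by (intro K_Int_if_card_sum_le) auto

end
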